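(* Let $0<p<\infty$ and let $w$ be a weight on $(0,\infty)$. Then $w\in B^*_\infty$ if and only if there is $C>0$ such that $\|Qf\|_{L^{p,\infty}(w)}\le C\|f\|_{L^{p,\infty}(w)}$ for every nonnegative decreasing function $f$ on $(0,\infty)$, where $Qf(t)=\int_t^\infty f(s)\frac{ds}{s}$.
   Context: A weight $w$ on $(0,\infty)$ is a positive locally integrable function, $W(t)=\int_0^tw$. $w\in B^*_\infty$ means: there is $C>0$ with $\int_0^r\frac{W(t)}{t}\,dt\le CW(r)$ for all $r>0$. For measurable $g$ on $(0,\infty)$, $\|g\|_{L^{p,\infty}(w)}=\sup_{\lambda>0}\lambda\left(\int_{\{t:|g(t)|>\lambda\}}w(t)\,dt\right)^{1/p}$. *)

theory Defs
  imports "HOL-Analysis.Analysis"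
begin

definition epowr :: "ennreal \<Rightarrow> real \<Rightarrow> ennreal" where
  "epowr x a = (if x = \<infinity> then \<infinity> else ennreal (enn2real x powr a))"

definition Wfun :: "(real \<Rightarrow> real) \<Rightarrow> real \<Rightarrow> ennreal" where
  "Wfun w t = (\<integral>\<^sup>+ x. indicator {0<..<t} x * ennreal (w x) \<partial>lborel)"

text \<open>A weight on (0,infinity): measurable, positive, and locally integrable
  (integrable on every (0,t), so that W is finite).\<close>
definition weight :: "(real \<Rightarrow> real) \<Rightarrow> bool" where
  "weight w \<longleftrightarrow> set_borel_measurable lborel {0<..} w
     \<and> (\<forall>t>0. w t > 0) \<and> (\<forall>t>0. Wfun w t < \<infinity>)"

definition B_star_inf :: "(real \<Rightarrow> real) \<Rightarrow> bool" where
  "B_star_inf w \<longleftrightarrow> (\<exists>C>0. \<forall>r>0.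
     (\<integral>\<^sup>+ t. indicator {0<..<r} t * Wfun w t * ennreal (1 / t) \<partial>lborel)
       \<le> ennreal C * Wfun w r)"

definition wmeas :: "(real \<Rightarrow> real) \<Rightarrow> real set \<Rightarrow> ennreal" where
  "wmeas w A = (\<integral>\<^sup>+ x. indicator (A \<inter> {0<..}) x * ennreal (w x) \<partial>lborel)"

text \<open>Weak L^{p,infinity}(w) quasi-norm of a function on (0,infinity) with values in [0,infinity]
  (apply it to the absolute value of a real function).\<close>
definition wnorm :: "real \<Rightarrow> (real \<Rightarrow> real) \<Rightarrow> (real \<Rightarrow> ennreal) \<Rightarrow> ennreal" where
  "wnorm p w g = (SUP lam\<in>{0<..}. ennreal lam * epowr (wmeas w {t. 0 < t \<and> ennreal lam < g t}) (1 / p))"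

definition Qop :: "(real \<Rightarrow> real) \<Rightarrow> real \<Rightarrow> ennreal" where
  "Qop f t = (\<integral>\<^sup>+ s. indicator {t<..} s * ennreal (f s / s) \<partial>lborel)"

end

theory Submission
  imports Defs
begin

(* Both conditions are equivalent to reverse doubling of W: W(q r) <= W(r)/2 for a fixed q < 1,
   which iterates to the power decay W(s) <= 2 (s/r)^d W(r) for s <= r.
   B*_inf yields reverse doubling because the integral of W(t)/t over (q r, r) is at least
   W(q r) ln(1/q). The weak-type bound yields it too: Q maps the indicator of (0, r] to ln(r/t),
   which exceeds ln(1/q) on (0, q r).
   Conversely, power decay bounds W(t)/t by a multiple of t^(d-1), giving B*_inf; and for
   decreasing f it turns f(s) W(s)^(1/p) <= ||f|| into Qf(t) <= C ||f|| W(t)^(-1/p), whose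
   level sets lie in sets {W <= c}, of w-measure at most c. *)

lemma nn_integral_Ioo_inverse:
  assumes "0 < s" "s \<le> r"
  shows "(\<integral>\<^sup>+ t. indicator {s<..<r} t * ennreal (1 / t) \<partial>lborel) = ennreal (ln r - ln s)"
proof -
  have "((\<lambda>t. 1 / t) has_integral (ln r - ln s)) {s..r}"
  proof (rule fundamental_theorem_of_calculus[OF assms(2)])
    fix x assume "x \<in> {s..r}"
    then have "x > 0" using assms by auto
    then show "(ln has_vector_derivative 1 / x) (at x within {s..r})"
      by (auto intro!: derivative_eq_intros simp: has_real_derivative_iff_has_vector_derivative[symmetric])
  qed
  then have "((\<lambda>t. 1 / t) has_integral (ln r - ln s)) {s<..<r}"
    using has_integral_open_interval[of _ _ s r] by (simp only: box_real cbox_interval) blast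
  from nn_integral_has_integral_lebesgue[OF _ this] assms
  have "(\<integral>\<^sup>+ t. ennreal (indicator {s<..<r} t * (1 / t)) \<partial>lborel) = ln r - ln s"
    by simp
  also have "(\<integral>\<^sup>+ t. ennreal (indicator {s<..<r} t * (1 / t)) \<partial>lborel)
      = (\<integral>\<^sup>+ t. indicator {s<..<r} t * ennreal (1 / t) \<partial>lborel)"
    by (intro nn_integral_cong) (simp add: indicator_def)
  finally show ?thesis by simp
qed

lemma nn_integral_Ioo_powr:
  assumes "0 < d" "0 < r"
  shows "(\<integral>\<^sup>+ t. indicator {0<..<r} t * ennreal (t powr (d - 1)) \<partial>lborel) = ennreal (r powr d / d)"
proof -
  have "((\<lambda>t. t powr (d - 1)) has_integral (r powr d / d)) {0..r}"
    using has_integral_powr_from_0[of "d - 1" r] assms by simp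
  then have "((\<lambda>t. t powr (d - 1)) has_integral (r powr d / d)) {0<..<r}"
    using has_integral_open_interval[of _ _ 0 r] by (simp only: box_real cbox_interval) blast
  from nn_integral_has_integral_lebesgue[OF _ this] assms show ?thesis
    by (simp add: ennreal_mult' ennreal_indicator)
qed

lemma nn_integral_Ioi_powr:
  assumes "0 < e" "0 < t"
  shows "(\<integral>\<^sup>+ s. indicator {t<..} s * ennreal (s powr (- e - 1)) \<partial>lborel) = ennreal (t powr (- e) / e)"
proof -
  have "((\<lambda>s. s powr (- e - 1)) has_integral (t powr (- e) / e)) {t..}"
    using has_integral_powr_to_inf[of "- e - 1" t] assms by simp
  from nn_integral_has_integral_lebesgue[OF _ this] assms
  have "(\<integral>\<^sup>+ s. indicator {t..} s * ennreal (s powr (- e - 1)) \<partial>lborel) = t powr (- e) / e"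
    by (simp add: ennreal_mult' ennreal_indicator)
  moreover have "(\<integral>\<^sup>+ s. indicator {t<..} s * ennreal (s powr (- e - 1)) \<partial>lborel)
      = (\<integral>\<^sup>+ s. indicator {t..} s * ennreal (s powr (- e - 1)) \<partial>lborel)"
    by (intro nn_integral_cong_AE) (use AE_lborel_singleton[of t] in \<open>auto simp: indicator_def elim!: AE_mp\<close>)
  ultimately show ?thesis by simp
qed

lemma weight_indicator_measurable:
  assumes "weight w" "A \<subseteq> {0<..}" "A \<in> sets borel"
  shows "(\<lambda>x. indicator A x * ennreal (w x)) \<in> borel_measurable lborel"
proof -
  have "(\<lambda>x. indicator {0<..} x *\<^sub>R w x) \<in> borel_measurable lborel"
    using assms(1) unfolding weight_def set_borel_measurable_def by simp
  then have "(\<lambda>x. indicator A x * ennreal (indicator {0<..} x *\<^sub>R w x)) \<in> borel_measurable lborel"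
    using assms(3) by measurable
  moreover have "(\<lambda>x. indicator A x * ennreal (indicator {0<..} x *\<^sub>R w x)) = (\<lambda>x. indicator A x * ennreal (w x))"
    using assms(2) by (auto simp: indicator_def fun_eq_iff)
  ultimately show ?thesis by simp
qed

lemma Wfun_mono: "s \<le> t \<Longrightarrow> Wfun w s \<le> Wfun w t"
  unfolding Wfun_def by (intro nn_integral_mono) (auto simp: indicator_def)

lemma Wfun_nonpos: "t \<le> 0 \<Longrightarrow> Wfun w t = 0"
  unfolding Wfun_def by (simp add: indicator_def)

lemma Wfun_finite: "weight w \<Longrightarrow> Wfun w t < \<infinity>"
  by (cases "t > 0") (auto simp: weight_def Wfun_nonpos)

lemma Wfun_pos:
  assumes "weight w" "0 < t"
  shows "0 < Wfun w t"
proof -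
  have "(\<lambda>x. indicator {0<..<t} x * ennreal (w x)) \<in> borel_measurable lborel"
    using assms(1) by (rule weight_indicator_measurable) auto
  moreover have "{x. indicator {0<..<t} x * ennreal (w x) \<noteq> 0} = {0<..<t}"
    using assms(1) by (auto simp: weight_def indicator_def)
  ultimately show ?thesis
    using assms(2) unfolding Wfun_def by (simp add: nn_integral_0_iff zero_less_iff_neq_zero)
qed

definition Wreal :: "(real \<Rightarrow> real) \<Rightarrow> real \<Rightarrow> real" where
  "Wreal w t = enn2real (Wfun w t)"

lemma Wfun_eq_Wreal: "weight w \<Longrightarrow> Wfun w t = ennreal (Wreal w t)"
  unfolding Wreal_def using Wfun_finite[of w t] by (simp add: less_top ennreal_enn2real)

lemma Wreal_nonneg: "0 \<le> Wreal w t"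
  by (simp add: Wreal_def)

lemma Wreal_mono: "weight w \<Longrightarrow> mono (Wreal w)"
  unfolding Wreal_def using Wfun_finite[of w] by (auto intro!: monoI enn2real_mono Wfun_mono)

lemma Wreal_pos: "weight w \<Longrightarrow> 0 < t \<Longrightarrow> 0 < Wreal w t"
  using Wfun_pos[of w t] Wfun_eq_Wreal[of w t] by simp

lemma wmeas_mono: "A \<subseteq> B \<Longrightarrow> wmeas w A \<le> wmeas w B"
  unfolding wmeas_def by (intro nn_integral_mono) (auto simp: indicator_def)

lemma wmeas_Ioo: "wmeas w {0<..<t} = Wfun w t"
  unfolding wmeas_def Wfun_def by (intro nn_integral_cong) (auto simp: indicator_def)

lemma wmeas_Ioc: "wmeas w {0<..t} = Wfun w t"
  unfolding wmeas_def Wfun_def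
  by (intro nn_integral_cong_AE) (use AE_lborel_singleton[of t] in \<open>auto simp: indicator_def elim!: AE_mp\<close>)

lemma wmeas_le_of_incseq_cover:
  assumes "weight w" "incseq t" "T \<subseteq> (\<Union>n. {0<..<t n})" "\<And>n. Wfun w (t n) \<le> c"
  shows "wmeas w T \<le> c"
proof -
  have "wmeas w T \<le> (\<integral>\<^sup>+ x. (SUP n. indicator {0<..<t n} x * ennreal (w x)) \<partial>lborel)"
    unfolding wmeas_def
  proof (intro nn_integral_mono)
    fix x
    show "indicator (T \<inter> {0<..}) x * ennreal (w x) \<le> (SUP n. indicator {0<..<t n} x * ennreal (w x))"
    proof (cases "x \<in> T")
      case True
      then obtain n where "x \<in> {0<..<t n}" using assms(3) by blast
      then show ?thesis by (intro SUP_upper2[of n]) (auto simp: indicator_def)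
    qed simp
  qed
  also have "\<dots> = (SUP n. Wfun w (t n))"
    unfolding Wfun_def
  proof (rule nn_integral_monotone_convergence_SUP)
    show "incseq (\<lambda>n x. indicator {0<..<t n} x * ennreal (w x))"
      using assms(2) by (auto simp: incseq_def le_fun_def indicator_def dest: less_le_trans)
  qed (intro weight_indicator_measurable[OF assms(1)]; auto)
  also have "\<dots> \<le> c" using assms(4) by (simp add: SUP_le_iff)
  finally show ?thesis .
qed

lemma wmeas_sublevel_Wfun_le:
  assumes "weight w"
  shows "wmeas w {t. 0 < t \<and> Wfun w t \<le> c} \<le> c"
proof -
  define T where "T = {t. 0 < t \<and> Wfun w t \<le> c}"
  have down: "s \<in> T" if "t \<in> T" "0 < s" "s \<le> t" for s t
    using that Wfun_mono[of s t w] by (auto simp: T_def)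
  consider "T = {}" | b where "b \<in> T" "\<forall>t\<in>T. t \<le> b" | "T \<noteq> {}" "\<forall>t\<in>T. \<exists>u\<in>T. t < u"
    by (meson not_le)
  then have "wmeas w T \<le> c"
  proof cases
    case 1
    then show ?thesis by (simp add: wmeas_def)
  next
    case (2 b)
    then have "wmeas w T \<le> wmeas w {0<..b}" by (intro wmeas_mono) (auto simp: T_def)
    also have "\<dots> \<le> c" using 2 by (simp add: wmeas_Ioc T_def)
    finally show ?thesis .
  next
    case 3
    text \<open>Without a largest element, T is exhausted by an increasing sequence of its own elements.\<close>
    obtain f :: "nat \<Rightarrow> ereal" where f: "incseq f" "range f \<subseteq> ereal ` T" "Sup (ereal ` T) = (SUP n. f n)"
      using Sup_countable_SUP[of "ereal ` T"] 3 by auto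
    define t where "t n = real_of_ereal (f n)" for n
    have f_eq: "f n = ereal (t n)" and t_in: "t n \<in> T" for n
    proof -
      obtain x where "f n = ereal x" "x \<in> T" using range_subsetD[OF f(2)] by (rule imageE)
      then show "f n = ereal (t n)" "t n \<in> T" by (simp_all add: t_def)
    qed
    show ?thesis
    proof (rule wmeas_le_of_incseq_cover[OF assms, of t])
      show "incseq t" using f(1) by (simp add: incseq_def f_eq)
      show "T \<subseteq> (\<Union>n. {0<..<t n})"
      proof
        fix x assume "x \<in> T"
        then obtain u where "u \<in> T" "x < u" using 3 by blast
        then have "ereal x < ereal u" by simp
        also have "\<dots> \<le> Sup (ereal ` T)" using \<open>u \<in> T\<close> by (intro Sup_upper) simp
        finally have "ereal x < Sup (ereal ` T)" .
        then obtain n where "x < t n" by (auto simp: f(3) less_SUP_iff f_eq)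
        with \<open>x \<in> T\<close> show "x \<in> (\<Union>n. {0<..<t n})" by (auto simp: T_def)
      qed
      show "Wfun w (t n) \<le> c" for n using t_in[of n] unfolding T_def by simp
    qed
  qed
  then show ?thesis by (simp add: T_def)
qed

definition reverse_doubling :: "(real \<Rightarrow> real) \<Rightarrow> bool" where
  "reverse_doubling g \<longleftrightarrow> (\<exists>q. 0 < q \<and> q < 1 \<and> (\<forall>r>0. g (q * r) \<le> g r / 2))"

definition power_decay :: "(real \<Rightarrow> real) \<Rightarrow> bool" where
  "power_decay g \<longleftrightarrow> (\<exists>d>0. \<forall>s r. 0 < s \<longrightarrow> s \<le> r \<longrightarrow> g s \<le> 2 * (s / r) powr d * g r)"

lemma halving_iterate:
  fixes g :: "real \<Rightarrow> real"
  assumes "0 < q" "\<And>r. 0 < r \<Longrightarrow> g (q * r) \<le> g r / 2" "0 < r"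
  shows "g (q ^ n * r) \<le> g r / 2 ^ n"
  using assms(3)
proof (induction n arbitrary: r)
  case (Suc n)
  have "g (q ^ Suc n * r) = g (q * (q ^ n * r))" by (simp add: mult.assoc)
  also have "\<dots> \<le> g (q ^ n * r) / 2" using assms(1,2) Suc.prems by simp
  also have "\<dots> \<le> g r / 2 ^ n / 2" using Suc by simp
  finally show ?case by simp
qed simp

lemma reverse_doubling_imp_power_decay:
  assumes "mono g" "\<And>t. 0 \<le> g t" "reverse_doubling g"
  shows "power_decay g"
proof -
  obtain q where q: "0 < q" "q < 1" and halve: "\<And>r. 0 < r \<Longrightarrow> g (q * r) \<le> g r / 2"
    using assms(3) unfolding reverse_doubling_def by blast
  define L where "L = - ln q"
  have L: "0 < L" using q by (simp add: L_def)
  have "g s \<le> 2 * (s / r) powr (ln 2 / L) * g r" if s: "0 < s" "s \<le> r" for s r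
  proof -
    text \<open>Halve n times, where n is the number of factors q that fit between s and r.\<close>
    define x where "x = ln (r / s) / L"
    define n where "n = nat \<lfloor>x\<rfloor>"
    have "0 \<le> x" using s L by (simp add: x_def)
    then have n: "real n \<le> x" "x < real n + 1" unfolding n_def by linarith+
    have "s / r = exp (- x * L)" using s L by (simp add: x_def ln_div exp_diff)
    also have "\<dots> \<le> exp (- real n * L)" using n L by (simp add: mult_right_mono)
    also have "\<dots> = q ^ n" using q by (simp add: L_def exp_of_nat_mult)
    finally have "s \<le> q ^ n * r" using s by (simp add: divide_le_eq)
    then have "g s \<le> g (q ^ n * r)" by (rule monoD[OF assms(1)])
    also have "\<dots> \<le> g r * 2 powr (- real n)"
      using halving_iterate[of q g r n] q(1) halve s by (simp add: powr_minus_divide powr_realpow)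
    also have "\<dots> \<le> g r * 2 powr (1 - x)" using n assms(2) by (intro mult_left_mono) auto
    also have "2 powr (1 - x) = 2 * (s / r) powr (ln 2 / L)"
    proof -
      have "(s / r) powr (ln 2 / L) = 2 powr (- x)"
        using s L by (simp add: powr_def x_def ln_div field_simps)
      then show ?thesis by (simp add: powr_diff powr_minus_divide)
    qed
    finally show ?thesis by (simp add: mult_ac)
  qed
  then show ?thesis unfolding power_decay_def using L by (intro exI[of _ "ln 2 / L"]) auto
qed

lemma B_star_inf_imp_reverse_doubling:
  assumes w: "weight w" and "B_star_inf w"
  shows "reverse_doubling (Wreal w)"
proof -
  obtain C where C: "0 < C" and HC: "\<And>r. 0 < r \<Longrightarrow>
     (\<integral>\<^sup>+ t. indicator {0<..<r} t * Wfun w t * ennreal (1 / t) \<partial>lborel) \<le> ennreal C * Wfun w r"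
    using assms(2) unfolding B_star_inf_def by blast
  define q where "q = exp (- (2 * C))"
  have q: "0 < q" "q < 1" using C by (auto simp: q_def)
  have "Wreal w (q * r) \<le> Wreal w r / 2" if r: "0 < r" for r
  proof -
    text \<open>On (qr, r) the integrand W(t)/t is at least W(qr)/t, whose integral is 2 C W(qr).\<close>
    have s: "0 < q * r" "q * r \<le> r" using q r by auto
    have "ln r - ln (q * r) = 2 * C" using q r by (simp add: q_def ln_mult)
    then have "ennreal (Wreal w (q * r) * (2 * C))
        = Wfun w (q * r) * (\<integral>\<^sup>+ t. indicator {q * r<..<r} t * ennreal (1 / t) \<partial>lborel)"
      using C by (simp add: nn_integral_Ioo_inverse[OF s] Wfun_eq_Wreal[OF w] ennreal_mult Wreal_nonneg)
    also have "\<dots> = (\<integral>\<^sup>+ t. Wfun w (q * r) * (indicator {q * r<..<r} t * ennreal (1 / t)) \<partial>lborel)"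
      by (rule nn_integral_cmult[symmetric]) measurable
    also have "\<dots> \<le> (\<integral>\<^sup>+ t. indicator {0<..<r} t * Wfun w t * ennreal (1 / t) \<partial>lborel)"
      using s by (intro nn_integral_mono) (auto simp: indicator_def intro!: mult_right_mono Wfun_mono)
    also have "\<dots> \<le> ennreal C * Wfun w r" by (rule HC[OF r])
    also have "\<dots> = ennreal (C * Wreal w r)"
      using C by (simp add: Wfun_eq_Wreal[OF w] ennreal_mult Wreal_nonneg)
    finally have "Wreal w (q * r) * (2 * C) \<le> C * Wreal w r"
      using C by (simp add: ennreal_le_iff Wreal_nonneg)
    then show ?thesis using C by (simp add: field_simps)
  qed
  then show ?thesis unfolding reverse_doubling_def using q by blast
qed

lemma power_decay_imp_B_star_inf:
  assumes w: "weight w" and "power_decay (Wreal w)"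
  shows "B_star_inf w"
proof -
  obtain d where d: "0 < d"
    and decay: "\<And>s r. 0 < s \<Longrightarrow> s \<le> r \<Longrightarrow> Wreal w s \<le> 2 * (s / r) powr d * Wreal w r"
    using assms(2) unfolding power_decay_def by blast
  have "(\<integral>\<^sup>+ t. indicator {0<..<r} t * Wfun w t * ennreal (1 / t) \<partial>lborel) \<le> ennreal (2 / d) * Wfun w r"
    if r: "0 < r" for r
  proof -
    define K where "K = 2 * Wreal w r / r powr d"
    have K: "0 \<le> K" by (simp add: K_def Wreal_nonneg)
    have "(\<integral>\<^sup>+ t. indicator {0<..<r} t * Wfun w t * ennreal (1 / t) \<partial>lborel)
        \<le> (\<integral>\<^sup>+ t. ennreal K * (indicator {0<..<r} t * ennreal (t powr (d - 1))) \<partial>lborel)"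
    proof (intro nn_integral_mono)
      fix t
      show "indicator {0<..<r} t * Wfun w t * ennreal (1 / t)
          \<le> ennreal K * (indicator {0<..<r} t * ennreal (t powr (d - 1)))"
      proof (cases "t \<in> {0<..<r}")
        case True
        then have t: "0 < t" "t \<le> r" by auto
        have "Wreal w t * (1 / t) \<le> 2 * (t / r) powr d * Wreal w r * (1 / t)"
          using decay[OF t] t by (intro mult_right_mono) auto
        also have "\<dots> = K * t powr (d - 1)"
          using t by (simp add: K_def powr_divide powr_diff field_simps)
        finally show ?thesis
          using True t K by (simp add: Wfun_eq_Wreal[OF w] Wreal_nonneg ennreal_mult[symmetric] ennreal_leI)
      qed simp
    qed
    also have "\<dots> = ennreal K * ennreal (r powr d / d)"
      by (simp add: nn_integral_cmult nn_integral_Ioo_powr[OF d r])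
    also have "\<dots> = ennreal (2 / d) * Wfun w r"
      using K d r by (simp add: Wfun_eq_Wreal[OF w] ennreal_mult[symmetric] K_def field_simps)
    finally show ?thesis .
  qed
  then show ?thesis unfolding B_star_inf_def using d by (intro exI[of _ "2 / d"]) auto
qed

lemma epowr_ennreal: "0 \<le> x \<Longrightarrow> epowr (ennreal x) a = ennreal (x powr a)"
  by (simp add: epowr_def)

lemma epowr_mono: "x \<le> y \<Longrightarrow> 0 < a \<Longrightarrow> epowr x a \<le> epowr y a"
  by (cases x; cases y) (auto simp: epowr_def top_unique intro!: ennreal_leI powr_mono2)

lemma wnorm_ge_of_gt_on_Ioo:
  assumes w: "weight w" and "0 < p" "0 < l" "\<And>t. 0 < t \<Longrightarrow> t < x \<Longrightarrow> ennreal l < g t"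
  shows "ennreal (l * Wreal w x powr (1 / p)) \<le> wnorm p w g"
proof -
  have "ennreal (Wreal w x powr (1 / p)) = epowr (wmeas w {0<..<x}) (1 / p)"
    by (simp add: wmeas_Ioo Wfun_eq_Wreal[OF w] epowr_ennreal Wreal_nonneg)
  also have "\<dots> \<le> epowr (wmeas w {t. 0 < t \<and> ennreal l < g t}) (1 / p)"
    using assms(2,4) by (intro epowr_mono wmeas_mono) auto
  finally have "ennreal (l * Wreal w x powr (1 / p))
      \<le> ennreal l * epowr (wmeas w {t. 0 < t \<and> ennreal l < g t}) (1 / p)"
    using assms(3) by (simp add: ennreal_mult mult_left_mono)
  also have "\<dots> \<le> wnorm p w g"
    unfolding wnorm_def using assms(3) by (intro SUP_upper) auto
  finally show ?thesis .
qed

lemma wnorm_le_of_le_Wreal: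
  assumes w: "weight w" and p: "0 < p" and A: "0 \<le> A"
    and g: "\<And>t. 0 < t \<Longrightarrow> g t \<le> ennreal (A / Wreal w t powr (1 / p))"
  shows "wnorm p w g \<le> ennreal A"
  unfolding wnorm_def
proof (intro SUP_least)
  fix l :: real assume "l \<in> {0<..}"
  then have l: "0 < l" by simp
  define c where "c = (A / l) powr p"
  have "{t. 0 < t \<and> ennreal l < g t} \<subseteq> {t. 0 < t \<and> Wfun w t \<le> ennreal c}"
  proof safe
    fix t assume t: "0 < t" "ennreal l < g t"
    have W: "0 < Wreal w t powr (1 / p)" using Wreal_pos[OF w t(1)] by simp
    have "ennreal l < ennreal (A / Wreal w t powr (1 / p))" using t g by (blast intro: less_le_trans)
    then have "Wreal w t powr (1 / p) < A / l" using l W by (simp add: ennreal_less_iff field_simps)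
    then have "(Wreal w t powr (1 / p)) powr p \<le> (A / l) powr p" using p W by (intro powr_mono2) auto
    then show "Wfun w t \<le> ennreal c"
      using p by (simp add: Wfun_eq_Wreal[OF w] powr_powr Wreal_nonneg c_def ennreal_leI)
  qed
  then have "wmeas w {t. 0 < t \<and> ennreal l < g t} \<le> ennreal c"
    using wmeas_sublevel_Wfun_le[OF w] by (blast intro: order_trans wmeas_mono)
  then have "epowr (wmeas w {t. 0 < t \<and> ennreal l < g t}) (1 / p) \<le> ennreal (A / l)"
    using epowr_mono[of _ "ennreal c" "1 / p"] p l A by (simp add: epowr_ennreal c_def powr_powr)
  then have "ennreal l * epowr (wmeas w {t. 0 < t \<and> ennreal l < g t}) (1 / p) \<le> ennreal l * ennreal (A / l)"
    by (rule mult_left_mono) simp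
  also have "\<dots> = ennreal A" using l A by (simp add: ennreal_mult[symmetric])
  finally show "ennreal l * epowr (wmeas w {t. 0 < t \<and> ennreal l < g t}) (1 / p) \<le> ennreal A" .
qed

lemma wnorm_indicator_le:
  assumes "weight w" "0 < p"
  shows "wnorm p w (\<lambda>t. ennreal \<bar>indicator {0<..r} t\<bar>) \<le> ennreal (Wreal w r powr (1 / p))"
  unfolding wnorm_def
proof (intro SUP_least)
  fix l :: real assume l: "l \<in> {0<..}"
  let ?E = "{t. 0 < t \<and> ennreal l < ennreal \<bar>indicator {0<..r} t :: real\<bar>}"
  show "ennreal l * epowr (wmeas w ?E) (1 / p) \<le> ennreal (Wreal w r powr (1 / p))"
  proof (cases "l < 1")
    case True
    have "epowr (wmeas w ?E) (1 / p) \<le> epowr (wmeas w {0<..r}) (1 / p)"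
      using assms(2) by (intro epowr_mono wmeas_mono) (auto simp: indicator_def)
    also have "\<dots> = ennreal (Wreal w r powr (1 / p))"
      by (simp add: wmeas_Ioc Wfun_eq_Wreal[OF assms(1)] epowr_ennreal Wreal_nonneg)
    finally have le: "epowr (wmeas w ?E) (1 / p) \<le> ennreal (Wreal w r powr (1 / p))" .
    have "ennreal l * epowr (wmeas w ?E) (1 / p) \<le> 1 * epowr (wmeas w ?E) (1 / p)"
      using True by (intro mult_right_mono) auto
    then show ?thesis using le by simp
  next
    case False
    then have E: "?E = {}" using l by (auto simp: indicator_def ennreal_less_iff)
    show ?thesis unfolding E using assms(2) by (simp add: wmeas_def epowr_def)
  qed
qed

lemma Qop_indicator_ge:
  assumes "0 < t" "t \<le> r"
  shows "ennreal (ln r - ln t) \<le> Qop (indicator {0<..r}) t"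
  unfolding Qop_def nn_integral_Ioo_inverse[OF assms, symmetric]
  using assms by (intro nn_integral_mono) (auto simp: indicator_def)

definition Q_weak_type :: "real \<Rightarrow> (real \<Rightarrow> real) \<Rightarrow> bool" where
  "Q_weak_type p w \<longleftrightarrow> (\<exists>C>0. \<forall>f :: real \<Rightarrow> real.
     (\<forall>t>0. 0 \<le> f t) \<and> (\<forall>s t. 0 < s \<longrightarrow> s \<le> t \<longrightarrow> f t \<le> f s) \<longrightarrow>
     wnorm p w (Qop f) \<le> ennreal C * wnorm p w (\<lambda>t. ennreal \<bar>f t\<bar>))"

lemma Q_weak_type_imp_reverse_doubling:
  assumes w: "weight w" and p: "0 < p" and "Q_weak_type p w"
  shows "reverse_doubling (Wreal w)"
proof -
  obtain C where C: "0 < C" and bounded: "\<And>f :: real \<Rightarrow> real.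
      (\<forall>t>0. 0 \<le> f t) \<Longrightarrow> (\<forall>s t. 0 < s \<longrightarrow> s \<le> t \<longrightarrow> f t \<le> f s) \<Longrightarrow>
      wnorm p w (Qop f) \<le> ennreal C * wnorm p w (\<lambda>t. ennreal \<bar>f t\<bar>)"
    using assms(3) unfolding Q_weak_type_def by blast
  define l where "l = C * 2 powr (1 / p)"
  define q where "q = exp (- l)"
  have l: "0 < l" using C by (simp add: l_def)
  then have q: "0 < q" "q < 1" by (auto simp: q_def)
  have "Wreal w (q * r) \<le> Wreal w r / 2" if r: "0 < r" for r
  proof -
    text \<open>Test the bound on the indicator of (0, r]: Q of it exceeds l on (0, q r).\<close>
    let ?f = "indicator {0<..r} :: real \<Rightarrow> real"
    have "q * r < r" using q r by simp
    have "ennreal l < Qop ?f t" if t: "0 < t" "t < q * r" for t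
    proof -
      have "l < ln r - ln t"
        using t q r ln_less_cancel_iff[of t "q * r"] by (simp add: q_def ln_mult)
      then have "ennreal l < ennreal (ln r - ln t)" using l by (simp add: ennreal_less_iff)
      also have "\<dots> \<le> Qop ?f t" using t \<open>q * r < r\<close> by (intro Qop_indicator_ge) auto
      finally show ?thesis .
    qed
    then have "ennreal (l * Wreal w (q * r) powr (1 / p)) \<le> wnorm p w (Qop ?f)"
      by (rule wnorm_ge_of_gt_on_Ioo[OF w p l])
    also have "\<dots> \<le> ennreal C * wnorm p w (\<lambda>t. ennreal \<bar>?f t\<bar>)"
      by (rule bounded) (auto simp: indicator_def)
    also have "\<dots> \<le> ennreal C * ennreal (Wreal w r powr (1 / p))"
      by (intro mult_left_mono wnorm_indicator_le[OF w p]) simp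
    finally have "C * (2 * Wreal w (q * r)) powr (1 / p) \<le> C * Wreal w r powr (1 / p)"
      using C by (simp add: l_def ennreal_mult[symmetric] ennreal_le_iff powr_mult Wreal_nonneg mult_ac)
    then have "(2 * Wreal w (q * r)) powr (1 / p) \<le> Wreal w r powr (1 / p)"
      using C by simp
    then have "((2 * Wreal w (q * r)) powr (1 / p)) powr p \<le> (Wreal w r powr (1 / p)) powr p"
      using p by (intro powr_mono2[of p]) auto
    then show ?thesis using p by (simp add: powr_powr Wreal_nonneg)
  qed
  then show ?thesis unfolding reverse_doubling_def using q by blast
qed

lemma decreasing_times_Wreal_le_wnorm:
  assumes w: "weight w" and p: "0 < p" and t: "0 < t"
    and f: "\<forall>t>0. 0 \<le> f t" "\<forall>s t. 0 < s \<longrightarrow> s \<le> t \<longrightarrow> f t \<le> f s"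
  shows "ennreal (f t * Wreal w t powr (1 / p)) \<le> wnorm p w (\<lambda>t. ennreal \<bar>f t\<bar>)"
proof (cases "wnorm p w (\<lambda>t. ennreal \<bar>f t\<bar>)")
  case (real a)
  have "f t * Wreal w t powr (1 / p) \<le> a"
  proof (rule field_le_mult_one_interval)
    fix z :: real assume z: "0 < z" "z < 1"
    show "z * (f t * Wreal w t powr (1 / p)) \<le> a"
    proof (cases "f t = 0")
      case False
      then have pos: "0 < z * f t" and "z * f t < f t" using f(1) t z by auto
      moreover have "f t \<le> \<bar>f u\<bar>" if "0 < u" "u < t" for u using f that by force
      ultimately have "ennreal (z * f t) < ennreal \<bar>f u\<bar>" if "0 < u" "u < t" for u
        using that by (simp add: ennreal_less_iff) (meson less_le_trans)
      then have "ennreal (z * f t * Wreal w t powr (1 / p)) \<le> wnorm p w (\<lambda>u. ennreal \<bar>f u\<bar>)"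
        by (rule wnorm_ge_of_gt_on_Ioo[OF w p pos])
      then have "ennreal (z * f t * Wreal w t powr (1 / p)) \<le> ennreal a" unfolding real(2) .
      then show ?thesis using real(1) by (simp add: mult.assoc)
    qed (use real in simp)
  qed
  then show ?thesis using real by (simp add: ennreal_leI)
qed simp

lemma power_decay_powr:
  fixes g :: "real \<Rightarrow> real"
  assumes "0 < p" "\<And>t. 0 \<le> g t" "0 < s" "s \<le> r" "g s \<le> 2 * (s / r) powr d * g r"
  shows "g s powr (1 / p) \<le> 2 powr (1 / p) * (s / r) powr (d / p) * g r powr (1 / p)"
proof -
  have "g s powr (1 / p) \<le> (2 * (s / r) powr d * g r) powr (1 / p)"
    using assms by (intro powr_mono2) auto
  also have "\<dots> = 2 powr (1 / p) * (s / r) powr (d / p) * g r powr (1 / p)"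
    using assms by (simp add: powr_mult powr_powr)
  finally show ?thesis .
qed

lemma Qop_integrand_le_of_power_decay:
  assumes w: "weight w" and p: "0 < p"
    and decay: "\<And>s r. 0 < s \<Longrightarrow> s \<le> r \<Longrightarrow> Wreal w s \<le> 2 * (s / r) powr d * Wreal w r"
    and f: "\<And>s. 0 < s \<Longrightarrow> f s * Wreal w s powr (1 / p) \<le> a" and a: "0 \<le> a"
    and ts: "0 < t" "t < s"
  shows "f s / s \<le> a * 2 powr (1 / p) * t powr (d / p) / Wreal w t powr (1 / p) * s powr (- (d / p) - 1)"
proof -
  define X where "X = Wreal w t powr (1 / p)"
  define Y where "Y = Wreal w s powr (1 / p)"
  define c where "c = 2 powr (1 / p) * (t / s) powr (d / p)"
  have s: "0 < s" using ts by simp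
  have X: "0 < X" and Y: "0 < Y" and c: "0 < c"
    using Wreal_pos[OF w ts(1)] Wreal_pos[OF w s] ts by (simp_all add: X_def Y_def c_def)
  have XY: "X \<le> c * Y"
    unfolding X_def Y_def c_def using p ts decay[of t s] by (intro power_decay_powr) (auto simp: Wreal_nonneg)
  have "f s \<le> a / Y" using f[OF s] Y by (simp add: Y_def pos_le_divide_eq)
  also have "\<dots> = a * c / (c * Y)" using c by simp
  also have "\<dots> \<le> a * c / X" using XY X Y c a by (intro divide_left_mono) auto
  finally have "f s / s \<le> a * c / X / s" using s by (intro divide_right_mono) auto
  also have "\<dots> = a * 2 powr (1 / p) * t powr (d / p) / X * s powr (- (d / p) - 1)"
    using ts by (simp add: c_def powr_divide powr_diff powr_minus field_simps)
  finally show ?thesis unfolding X_def .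
qed

lemma Qop_le_of_power_decay:
  assumes w: "weight w" and p: "0 < p" and d: "0 < d"
    and decay: "\<And>s r. 0 < s \<Longrightarrow> s \<le> r \<Longrightarrow> Wreal w s \<le> 2 * (s / r) powr d * Wreal w r"
    and f: "\<And>s. 0 < s \<Longrightarrow> f s * Wreal w s powr (1 / p) \<le> a" and a: "0 \<le> a"
    and t: "0 < t"
  shows "Qop f t \<le> ennreal (2 powr (1 / p) * (p / d) * a / Wreal w t powr (1 / p))"
proof -
  define e where "e = d / p"
  define X where "X = Wreal w t powr (1 / p)"
  define K where "K = a * 2 powr (1 / p) * t powr e / X"
  have e: "0 < e" using d p by (simp add: e_def)
  have K: "0 \<le> K" using a Wreal_pos[OF w t] by (simp add: K_def X_def)
  have "f s / s \<le> K * s powr (- e - 1)" if "t < s" for s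
    using Qop_integrand_le_of_power_decay[OF w p decay f a t that] by (simp add: K_def X_def e_def)
  then have "Qop f t \<le> (\<integral>\<^sup>+ s. ennreal K * (indicator {t<..} s * ennreal (s powr (- e - 1))) \<partial>lborel)"
    unfolding Qop_def
    by (intro nn_integral_mono) (auto simp: indicator_def K ennreal_mult[symmetric] ennreal_leI)
  also have "\<dots> = ennreal K * ennreal (t powr (- e) / e)"
    by (simp add: nn_integral_cmult nn_integral_Ioi_powr[OF e t])
  also have "\<dots> = ennreal (2 powr (1 / p) * (p / d) * a / X)"
  proof -
    have "K * (t powr (- e) / e) = 2 powr (1 / p) * (p / d) * a / X"
      using t e d p by (simp add: K_def e_def powr_minus field_simps)
    then show ?thesis using K e by (simp add: ennreal_mult[symmetric])
  qed
  finally show ?thesis unfolding X_def .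
qed

lemma power_decay_imp_Q_weak_type:
  assumes w: "weight w" and p: "0 < p" and "power_decay (Wreal w)"
  shows "Q_weak_type p w"
proof -
  obtain d where d: "0 < d"
    and decay: "\<And>s r. 0 < s \<Longrightarrow> s \<le> r \<Longrightarrow> Wreal w s \<le> 2 * (s / r) powr d * Wreal w r"
    using assms(3) unfolding power_decay_def by blast
  define M where "M = 2 powr (1 / p) * (p / d)"
  have M: "0 < M" using p d by (simp add: M_def)
  have "wnorm p w (Qop f) \<le> ennreal M * wnorm p w (\<lambda>t. ennreal \<bar>f t\<bar>)"
    if f: "\<forall>t>0. 0 \<le> f t" "\<forall>s t. 0 < s \<longrightarrow> s \<le> t \<longrightarrow> f t \<le> f s" for f
  proof (cases "wnorm p w (\<lambda>t. ennreal \<bar>f t\<bar>)")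
    case (real a)
    have "f s * Wreal w s powr (1 / p) \<le> a" if "0 < s" for s
      using decreasing_times_Wreal_le_wnorm[OF w p that f] real by (simp add: ennreal_le_iff)
    then have "Qop f t \<le> ennreal (M * a / Wreal w t powr (1 / p))" if "0 < t" for t
      using Qop_le_of_power_decay[OF w p d decay _ real(1) that] by (simp add: M_def)
    then have "wnorm p w (Qop f) \<le> ennreal (M * a)"
      using M real(1) by (intro wnorm_le_of_le_Wreal[OF w p]) auto
    then show ?thesis using M real by (simp add: ennreal_mult)
  qed (use M in \<open>simp add: ennreal_mult_top\<close>)
  then show ?thesis unfolding Q_weak_type_def using M by blast
qed

theorem corollary2p5:
  fixes p :: real and w :: "real \<Rightarrow> real"
  assumes "0 < p" and "weight w"
  shows "B_star_inf w \<longleftrightarrow>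
    (\<exists>C>0. \<forall>f :: real \<Rightarrow> real.
       (\<forall>t>0. 0 \<le> f t) \<and> (\<forall>s t. 0 < s \<longrightarrow> s \<le> t \<longrightarrow> f t \<le> f s) \<longrightarrow>
       wnorm p w (Qop f) \<le> ennreal C * wnorm p w (\<lambda>t. ennreal \<bar>f t\<bar>))"
proof -
  have "reverse_doubling (Wreal w) \<Longrightarrow> power_decay (Wreal w)"
    using assms(2) by (intro reverse_doubling_imp_power_decay Wreal_mono Wreal_nonneg)
  then have "B_star_inf w \<longleftrightarrow> reverse_doubling (Wreal w)"
    and "Q_weak_type p w \<longleftrightarrow> reverse_doubling (Wreal w)"
    using assms B_star_inf_imp_reverse_doubling power_decay_imp_B_star_inf
      Q_weak_type_imp_reverse_doubling power_decay_imp_Q_weak_type by blast+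
  then show ?thesis unfolding Q_weak_type_def by simp
qed

end
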